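(* Let $\lambda>0$ and $\sigma<2\sqrt\pi$. The measure $\nu$ is $\sigma$-finite; more precisely, for every $\epsilon\in(0,1)$, $\nu(\{\phi:\epsilon<M_\phi(\Lambda)<\epsilon^{-1}\})<\infty$ (indeed also $\hat\mu(\{\phi:\epsilon<M_\phi(\Lambda)<\epsilon^{-1}\})<\infty$). Moreover, for every $f\in H$, $\epsilon\in(0,1)$, $a>0$ and $p\in[1,\infty)$, the function $\phi\mapsto\langle f,\Delta\phi\rangle\,\mathbf 1_{[\epsilon,\epsilon^{-1}]}(M_\phi(\Lambda))$ belongs to $L^p(\hat\mu)$ and $L^p(\nu)$, and the function $\phi\mapsto\exp(a|\langle\phi_0,f\rangle_H|)\,\mathbf 1_{[\epsilon,\epsilon^{-1}]}(M_\phi(\Lambda))$ is integrable with respect to $\hat\mu$ and $\nu$.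
   Context: Let $\Lambda=\mathbb C/(\mathbb Z+\tau\mathbb Z)$, $\Im\tau>0$, be a flat torus with Lebesgue area measure $\omega_0$ and Laplacian $\Delta$. Let $H=H^1(\Lambda)$ with $\langle u,v\rangle_H=\int\nabla u\cdot\nabla v\,\omega_0$, $\Phi=H^{-\varepsilon}(\Lambda)$ for a fixed small $\varepsilon>0$, each $\phi=m+\phi_0$ ($m\in\mathbb R$ constant, $\phi_0$ mean zero). $\mu$ is the law of the mean-zero Gaussian free field with covariance operator $\frac{\sigma^2}{2}(-\Delta)^{-1}$, $\hat\mu=dm\otimes d\mu$ ($dm$ Lebesgue). For $f\in H$, $\langle f,\Delta\phi\rangle:=-\langle f,\phi_0\rangle_H$ (a centered Gaussian under $\mu$, defined a.e. via Paley–Wiener). $M_\phi=\,:\!e^{2\phi}\omega_0\!:$ is the Gaussian multiplicative chaos (a.s. weak limit of $e^{2\phi_\delta-2\mathbb E[\phi_\delta^2]}\omega_0$, $\phi_\delta$ circle averages), satisfying $M_{\phi+h}=e^{2h}M_\phi$ a.e. for fixed $h\in H$ (in particular $M_{m+\phi_0}=e^{2m}M_{\phi_0}$). The Liouville measure is $d\nu(\phi)=\exp(-\lambda\sigma^{-2}M_\phi(\Lambda))\,d\hat\mu(\phi)$. *)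

theory Defs
  imports "HOL-Probability.Probability"
begin

(* Flat torus Lambda = C/(Z + tau Z), realised on the fundamental domain
   P = {s + t tau : 0 <= s,t < 1} with Lebesgue measure (omega_0). *)
definition Pdom :: "complex \<Rightarrow> complex set" where
  "Pdom \<tau> = {of_real s + of_real t * \<tau> | s t. 0 \<le> s \<and> s < 1 \<and> 0 \<le> t \<and> t < 1}"

(* lattice coordinates: z = s + t tau *)
definition tcoord :: "complex \<Rightarrow> complex \<Rightarrow> real" where
  "tcoord \<tau> z = Im z / Im \<tau>"
definition scoord :: "complex \<Rightarrow> complex \<Rightarrow> real" where
  "scoord \<tau> z = Re z - tcoord \<tau> z * Re \<tau>"

(* eigenvalue of -Delta on the Fourier mode k = (m,n) *)
definition eig :: "complex \<Rightarrow> int \<times> int \<Rightarrow> real" where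
  "eig \<tau> k = (case k of (m, n) \<Rightarrow>
      4 * pi\<^sup>2 * ((real_of_int m)\<^sup>2 + ((real_of_int n - real_of_int m * Re \<tau>) / Im \<tau>)\<^sup>2))"

(* real L^2(omega_0)-orthonormal eigenbasis of -Delta on the mean-zero functions *)
definition psi :: "complex \<Rightarrow> int \<times> int \<Rightarrow> complex \<Rightarrow> real" where
  "psi \<tau> k z = (case k of (m, n) \<Rightarrow>
      sqrt (2 / Im \<tau>) *
      (if m > 0 \<or> (m = 0 \<and> n > 0) then cos else sin)
        (2 * pi * (real_of_int m * scoord \<tau> z + real_of_int n * tcoord \<tau> z)))"

definition box :: "nat \<Rightarrow> (int \<times> int) set" where
  "box N = {(m, n). \<bar>m\<bar> \<le> int N \<and> \<bar>n\<bar> \<le> int N \<and> (m, n) \<noteq> (0, 0)}"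

(* limit of the box partial sums (0 where the series diverges; only used a.e.) *)
definition series_lim :: "(int \<times> int \<Rightarrow> real) \<Rightarrow> real" where
  "series_lim g = (if convergent (\<lambda>N. \<Sum>k\<in>box N. g k) then lim (\<lambda>N. \<Sum>k\<in>box N. g k) else 0)"

(* The mean-zero GFF phi_0 = sum_k coef_k psi_k is parametrised by an i.i.d. standard
   Gaussian family xi; mu = law of xi. *)
definition gff_mu :: "(int \<times> int \<Rightarrow> real) measure" where
  "gff_mu = PiM UNIV (\<lambda>_. density lborel std_normal_density)"

definition coef :: "real \<Rightarrow> complex \<Rightarrow> (int \<times> int \<Rightarrow> real) \<Rightarrow> int \<times> int \<Rightarrow> real" where
  "coef \<sigma> \<tau> \<xi> k = sqrt (\<sigma>\<^sup>2 / (2 * eig \<tau> k)) * \<xi> k"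

(* a field phi = m + phi_0 is represented by the pair (m, xi);  mu_hat = dm (x) dmu *)
definition mu_hat :: "(real \<times> (int \<times> int \<Rightarrow> real)) measure" where
  "mu_hat = lborel \<Otimes>\<^sub>M gff_mu"

definition circ_avg :: "complex \<Rightarrow> int \<times> int \<Rightarrow> real \<Rightarrow> complex \<Rightarrow> real" where
  "circ_avg \<tau> k \<delta> z = (1 / (2 * pi)) * integral {0..2*pi} (\<lambda>\<theta>. psi \<tau> k (z + of_real \<delta> * cis \<theta>))"

definition circ_field :: "real \<Rightarrow> complex \<Rightarrow> (int \<times> int \<Rightarrow> real) \<Rightarrow> real \<Rightarrow> complex \<Rightarrow> real" where
  "circ_field \<sigma> \<tau> \<xi> \<delta> z = series_lim (\<lambda>k. coef \<sigma> \<tau> \<xi> k * circ_avg \<tau> k \<delta> z)"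

definition gmc_approx :: "real \<Rightarrow> complex \<Rightarrow> real \<Rightarrow> real \<times> (int \<times> int \<Rightarrow> real) \<Rightarrow> real" where
  "gmc_approx \<sigma> \<tau> \<delta> \<phi> =
     (LINT z:Pdom \<tau>|lborel. exp (2 * (fst \<phi> + circ_field \<sigma> \<tau> (snd \<phi>) \<delta> z)
        - 2 * (\<integral>\<xi>. (circ_field \<sigma> \<tau> \<xi> \<delta> z)\<^sup>2 \<partial>gff_mu)))"

(* M_phi(Lambda): total mass of the Gaussian multiplicative chaos, the limit along
   delta = 2^-n (0 where the limit does not exist; this is a null set) *)
definition gmc_mass :: "real \<Rightarrow> complex \<Rightarrow> real \<times> (int \<times> int \<Rightarrow> real) \<Rightarrow> real" where
  "gmc_mass \<sigma> \<tau> \<phi> =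
     (if convergent (\<lambda>n. gmc_approx \<sigma> \<tau> (1 / 2 ^ n) \<phi>)
      then lim (\<lambda>n. gmc_approx \<sigma> \<tau> (1 / 2 ^ n) \<phi>) else 0)"

definition liouville :: "real \<Rightarrow> complex \<Rightarrow> real \<Rightarrow> (real \<times> (int \<times> int \<Rightarrow> real)) measure" where
  "liouville \<sigma> \<tau> lmb = density mu_hat (\<lambda>\<phi>. ennreal (exp (- lmb / \<sigma>\<^sup>2 * gmc_mass \<sigma> \<tau> \<phi>)))"

definition fcoef :: "complex \<Rightarrow> (complex \<Rightarrow> real) \<Rightarrow> int \<times> int \<Rightarrow> real" where
  "fcoef \<tau> f k = (LINT z:Pdom \<tau>|lborel. f z * psi \<tau> k z)"

definition in_H :: "complex \<Rightarrow> (complex \<Rightarrow> real) \<Rightarrow> bool" where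
  "in_H \<tau> f \<longleftrightarrow> f \<in> borel_measurable lborel \<and> set_integrable lborel (Pdom \<tau>) (\<lambda>z. (f z)\<^sup>2)
     \<and> (\<lambda>k. eig \<tau> k * (fcoef \<tau> f k)\<^sup>2) summable_on (UNIV - {(0, 0)})"

(* <phi_0, f>_H  (Paley--Wiener), so that <f, Delta phi> = - H_pair *)
definition H_pair :: "real \<Rightarrow> complex \<Rightarrow> (complex \<Rightarrow> real) \<Rightarrow> real \<times> (int \<times> int \<Rightarrow> real) \<Rightarrow> real" where
  "H_pair \<sigma> \<tau> f \<phi> = series_lim (\<lambda>k. eig \<tau> k * fcoef \<tau> f k * coef \<sigma> \<tau> (snd \<phi>) k)"

definition f_Delta_phi :: "real \<Rightarrow> complex \<Rightarrow> (complex \<Rightarrow> real) \<Rightarrow> real \<times> (int \<times> int \<Rightarrow> real) \<Rightarrow> real" where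
  "f_Delta_phi \<sigma> \<tau> f \<phi> = - H_pair \<sigma> \<tau> f \<phi>"

definition in_Lp :: "'a measure \<Rightarrow> real \<Rightarrow> ('a \<Rightarrow> real) \<Rightarrow> bool" where
  "in_Lp M p g \<longleftrightarrow> g \<in> borel_measurable M \<and> integrable M (\<lambda>x. \<bar>g x\<bar> powr p)"

end

theory Submission
  imports Defs
begin

text \<open>
  The zero mode only rescales the chaos: \<open>M(m + \<phi>\<^sub>0) = e\<^sup>2\<^sup>m M(\<phi>\<^sub>0)\<close>. Hence, for fixed \<open>\<phi>\<^sub>0\<close>,
  the zero modes \<open>m\<close> with \<open>M \<in> [\<epsilon>, 1/\<epsilon>]\<close> form an interval of length \<open>-ln \<epsilon>\<close>, and Tonelli for
  \<open>dm \<otimes> \<mu>\<close> bounds the integral of \<open>F(\<phi>\<^sub>0)\<close> over \<open>{\<epsilon> \<le> M \<le> 1/\<epsilon>}\<close> by \<open>-ln \<epsilon>\<close> times the \<open>\<mu>\<close>-integral of \<open>F\<close>.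
  For \<open>F = 1\<close> this bounds the mass of the band. For \<open>F = exp (a |\<langle>\<phi>\<^sub>0, f\<rangle>\<^sub>H|)\<close> it leaves an
  exponential moment of a Gaussian series whose partial sums have variance at most
  \<open>\<sigma>\<^sup>2 \<parallel>f\<parallel>\<^sub>H\<^sup>2 / 2\<close>, and Fatou passes the bound to the limit; polynomial moments follow from
  \<open>x\<^sup>p \<le> p\<^sup>p e\<^sup>x\<close>. The Liouville density is at most 1, so every bound transfers to \<open>\<nu>\<close>.
\<close>

section \<open>Exponential moments of Gaussian series\<close>

abbreviation std_normal :: "real measure" where
  "std_normal \<equiv> density lborel std_normal_density"

lemma nn_integral_exp_std_normal:
  "(\<integral>\<^sup>+x. ennreal (exp (u * x)) \<partial>std_normal) = ennreal (exp (u\<^sup>2 / 2))"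
proof -
  have shift: "std_normal_density x * exp (u * x) = exp (u\<^sup>2 / 2) * normal_density u 1 x" for x
    unfolding normal_density_def
    by (simp add: exp_add[symmetric] power2_eq_square algebra_simps) (simp add: field_simps)
  interpret N: prob_space "density lborel (normal_density u 1)"
    by (rule prob_space_normal_density) simp
  have total: "(\<integral>\<^sup>+x. ennreal (normal_density u 1 x) \<partial>lborel) = 1"
    using N.emeasure_space_1 by (simp add: emeasure_density)
  have "(\<integral>\<^sup>+x. ennreal (exp (u * x)) \<partial>std_normal)
      = (\<integral>\<^sup>+x. ennreal (std_normal_density x) * ennreal (exp (u * x)) \<partial>lborel)"
    by (subst nn_integral_density) (auto simp: normal_density_nonneg)
  also have "\<dots> = (\<integral>\<^sup>+x. ennreal (exp (u\<^sup>2 / 2)) * ennreal (normal_density u 1 x) \<partial>lborel)"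
    by (intro nn_integral_cong) (simp add: ennreal_mult[symmetric] normal_density_nonneg shift)
  also have "\<dots> = ennreal (exp (u\<^sup>2 / 2))"
    by (subst nn_integral_cmult) (auto simp: total)
  finally show ?thesis .
qed

lemma prob_space_std_normal: "prob_space std_normal"
  by (rule prob_space_normal_density) simp

interpretation gff: product_prob_space "\<lambda>_. std_normal" UNIV
  by (simp add: product_prob_space_def product_prob_space_axioms_def product_sigma_finite_def
      prob_space_std_normal prob_space_imp_sigma_finite)

lemma prob_space_gff_mu: "prob_space gff_mu"
  unfolding gff_mu_def by (rule gff.P.prob_space_axioms)

lemma sigma_finite_gff_mu: "sigma_finite_measure gff_mu"
  using prob_space_gff_mu by (rule prob_space_imp_sigma_finite)

lemma nn_integral_exp_linear_gff_mu:
  assumes "finite J"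
  shows "(\<integral>\<^sup>+\<xi>. ennreal (exp (\<Sum>k\<in>J. c k * \<xi> k)) \<partial>gff_mu) = ennreal (exp ((\<Sum>k\<in>J. (c k)\<^sup>2) / 2))"
proof -
  have "(\<integral>\<^sup>+\<xi>. ennreal (exp (\<Sum>k\<in>J. c k * \<xi> k)) \<partial>gff_mu)
      = (\<integral>\<^sup>+\<xi>. (\<Prod>k\<in>J. ennreal (exp (c k * restrict \<xi> J k))) \<partial>PiM UNIV (\<lambda>_. std_normal))"
    unfolding gff_mu_def using assms by (intro nn_integral_cong) (simp add: exp_sum prod_ennreal)
  also have "\<dots> = (\<integral>\<^sup>+\<xi>. (\<Prod>k\<in>J. ennreal (exp (c k * \<xi> k)))
      \<partial>distr (PiM UNIV (\<lambda>_. std_normal)) (PiM J (\<lambda>_. std_normal)) (\<lambda>x. restrict x J))"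
    by (subst nn_integral_distr) (auto intro!: measurable_restrict_subset)
  also have "\<dots> = (\<integral>\<^sup>+\<xi>. (\<Prod>k\<in>J. ennreal (exp (c k * \<xi> k))) \<partial>PiM J (\<lambda>_. std_normal))"
    using assms by (subst gff.distr_PiM_restrict_finite) auto
  also have "\<dots> = (\<Prod>k\<in>J. \<integral>\<^sup>+x. ennreal (exp (c k * x)) \<partial>std_normal)"
    using assms by (subst gff.product_nn_integral_prod) auto
  also have "\<dots> = ennreal (exp ((\<Sum>k\<in>J. (c k)\<^sup>2) / 2))"
    using assms by (simp add: nn_integral_exp_std_normal prod_ennreal exp_sum sum_divide_distrib)
  finally show ?thesis .
qed

lemma measurable_gff_mu_component[measurable]: "(\<lambda>\<xi>. \<xi> k) \<in> borel_measurable gff_mu"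
proof -
  have "(\<lambda>\<xi>. \<xi> k) \<in> measurable (PiM UNIV (\<lambda>_. std_normal)) std_normal"
    by (rule measurable_component_singleton) simp
  then show ?thesis
    unfolding gff_mu_def using measurable_cong_sets[OF refl, of std_normal borel] by simp
qed

lemma nn_integral_exp_abs_linear_gff_mu_le:
  assumes "finite J" and "0 \<le> a"
  shows "(\<integral>\<^sup>+\<xi>. ennreal (exp (a * \<bar>\<Sum>k\<in>J. c k * \<xi> k\<bar>)) \<partial>gff_mu)
    \<le> ennreal (2 * exp (a\<^sup>2 * (\<Sum>k\<in>J. (c k)\<^sup>2) / 2))"
proof -
  let ?S = "\<lambda>\<xi>. \<Sum>k\<in>J. c k * \<xi> k"
  have "(\<integral>\<^sup>+\<xi>. ennreal (exp (a * \<bar>?S \<xi>\<bar>)) \<partial>gff_mu)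
      \<le> (\<integral>\<^sup>+\<xi>. ennreal (exp (\<Sum>k\<in>J. (a * c k) * \<xi> k))
          + ennreal (exp (\<Sum>k\<in>J. (- a * c k) * \<xi> k)) \<partial>gff_mu)"
  proof (intro nn_integral_mono)
    fix \<xi>
    have "exp (a * \<bar>?S \<xi>\<bar>) \<le> exp (a * ?S \<xi>) + exp (- (a * ?S \<xi>))"
      by (cases "?S \<xi> \<ge> 0") (auto simp: abs_if)
    then show "ennreal (exp (a * \<bar>?S \<xi>\<bar>))
        \<le> ennreal (exp (\<Sum>k\<in>J. (a * c k) * \<xi> k)) + ennreal (exp (\<Sum>k\<in>J. (- a * c k) * \<xi> k))"
      by (simp add: sum_distrib_left sum_negf mult.assoc ennreal_plus[symmetric] del: ennreal_plus)
  qed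
  also have "\<dots> = ennreal (2 * exp (a\<^sup>2 * (\<Sum>k\<in>J. (c k)\<^sup>2) / 2))"
    using nn_integral_exp_linear_gff_mu[OF assms(1), of "\<lambda>k. a * c k"]
      nn_integral_exp_linear_gff_mu[OF assms(1), of "\<lambda>k. - a * c k"]
    by (subst nn_integral_add)
      (auto simp: power_mult_distrib sum_distrib_left ennreal_plus[symmetric] simp del: ennreal_plus)
  finally show ?thesis .
qed

lemma finite_box: "finite (box N)"
  by (rule finite_subset[of _ "{-int N..int N} \<times> {-int N..int N}"]) (auto simp: box_def)

text \<open>The junk value \<open>0\<close> off the convergence set is harmless: \<open>exp 0 = 1\<close> lies below every term.\<close>

lemma exp_abs_lim_le_liminf:
  fixes s :: "nat \<Rightarrow> real"
  assumes "0 \<le> a"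
  shows "ennreal (exp (a * \<bar>if convergent s then lim s else 0\<bar>)) \<le> liminf (\<lambda>n. ennreal (exp (a * \<bar>s n\<bar>)))"
proof (cases "convergent s")
  case True
  then have "(\<lambda>n. ennreal (exp (a * \<bar>s n\<bar>))) \<longlonglongrightarrow> ennreal (exp (a * \<bar>lim s\<bar>))"
    by (intro tendsto_ennrealI tendsto_intros) (simp add: convergent_LIMSEQ_iff)
  then have "liminf (\<lambda>n. ennreal (exp (a * \<bar>s n\<bar>))) = ennreal (exp (a * \<bar>lim s\<bar>))"
    by (intro lim_imp_Liminf) auto
  with True show ?thesis by simp
next
  case False
  have "ennreal 1 \<le> liminf (\<lambda>n. ennreal (exp (a * \<bar>s n\<bar>)))"
    by (intro Liminf_bounded always_eventually allI ennreal_leI) (simp add: assms)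
  with False show ?thesis by simp
qed

lemma nn_integral_exp_abs_series_lim_le:
  assumes "0 \<le> a" and V: "\<And>N. (\<Sum>k\<in>box N. (c k)\<^sup>2) \<le> V"
  shows "(\<integral>\<^sup>+\<xi>. ennreal (exp (a * \<bar>series_lim (\<lambda>k. c k * \<xi> k)\<bar>)) \<partial>gff_mu)
    \<le> ennreal (2 * exp (a\<^sup>2 * V / 2))"
proof -
  let ?S = "\<lambda>N \<xi>. \<Sum>k\<in>box N. c k * \<xi> k"
  have "(\<integral>\<^sup>+\<xi>. ennreal (exp (a * \<bar>series_lim (\<lambda>k. c k * \<xi> k)\<bar>)) \<partial>gff_mu)
     \<le> (\<integral>\<^sup>+\<xi>. liminf (\<lambda>N. ennreal (exp (a * \<bar>?S N \<xi>\<bar>))) \<partial>gff_mu)"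
    unfolding series_lim_def by (intro nn_integral_mono exp_abs_lim_le_liminf assms)
  also have "\<dots> \<le> liminf (\<lambda>N. \<integral>\<^sup>+\<xi>. ennreal (exp (a * \<bar>?S N \<xi>\<bar>)) \<partial>gff_mu)"
    by (intro nn_integral_liminf) measurable
  also have "\<dots> \<le> ennreal (2 * exp (a\<^sup>2 * V / 2))"
  proof (intro Liminf_le always_eventually allI)
    fix N
    have "exp (a\<^sup>2 * (\<Sum>k\<in>box N. (c k)\<^sup>2) / 2) \<le> exp (a\<^sup>2 * V / 2)"
      using V[of N] by (simp add: mult_left_mono)
    then show "(\<integral>\<^sup>+\<xi>. ennreal (exp (a * \<bar>?S N \<xi>\<bar>)) \<partial>gff_mu) \<le> ennreal (2 * exp (a\<^sup>2 * V / 2))"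
      using nn_integral_exp_abs_linear_gff_mu_le[OF finite_box[of N] assms(1), of c]
      by (auto intro: order_trans ennreal_leI)
  qed simp
  finally show ?thesis .
qed

section \<open>Measurability of the chaos mass\<close>

lemma borel_measurable_series_lim[measurable]:
  assumes [measurable]: "\<And>k. (\<lambda>x. g x k) \<in> borel_measurable M"
  shows "(\<lambda>x. series_lim (g x)) \<in> borel_measurable M"
proof -
  have "(\<lambda>x. series_lim (g x))
      = (\<lambda>x. if Cauchy (\<lambda>N. \<Sum>k\<in>box N. g x k) then lim (\<lambda>N. \<Sum>k\<in>box N. g x k) else 0)"
    by (simp add: series_lim_def Cauchy_convergent_iff fun_eq_iff)
  also have "\<dots> \<in> borel_measurable M"
  proof (rule measurable_If)
    show "{x \<in> space M. Cauchy (\<lambda>N. \<Sum>k\<in>box N. g x k)} \<in> sets M" by measurable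
  qed measurable
  finally show ?thesis .
qed

lemma borel_measurable_lim_if_convergent:
  fixes g :: "nat \<Rightarrow> 'a \<Rightarrow> real"
  assumes [measurable]: "\<And>n. g n \<in> borel_measurable M"
  shows "(\<lambda>x. if convergent (\<lambda>n. g n x) then lim (\<lambda>n. g n x) else 0) \<in> borel_measurable M"
  unfolding Cauchy_convergent_iff[symmetric]
proof (rule measurable_If)
  show "{x \<in> space M. Cauchy (\<lambda>n. g n x)} \<in> sets M" by measurable
qed measurable

lemma continuous_on_tcoord: "continuous_on UNIV (tcoord \<tau>)"
  unfolding tcoord_def[abs_def] divide_inverse by (intro continuous_intros)

lemma continuous_on_scoord: "continuous_on UNIV (scoord \<tau>)"
  unfolding scoord_def[abs_def] by (intro continuous_intros continuous_on_tcoord)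

lemma continuous_on_psi: "continuous_on UNIV (psi \<tau> k)"
proof (cases k)
  case (Pair m n)
  let ?L = "\<lambda>z. 2 * pi * (real_of_int m * scoord \<tau> z + real_of_int n * tcoord \<tau> z)"
  have L: "continuous_on UNIV ?L"
    by (intro continuous_intros continuous_on_scoord continuous_on_tcoord)
  have "continuous_on UNIV
      (\<lambda>z. sqrt (2 / Im \<tau>) * (if m > 0 \<or> (m = 0 \<and> n > 0) then cos else sin) (?L z))"
    by (cases "m > 0 \<or> (m = 0 \<and> n > 0)")
      (auto simp add: continuous_on_mult_left continuous_on_cos[OF L] continuous_on_sin[OF L])
  then show ?thesis unfolding Pair psi_def[abs_def] by simp
qed

lemma borel_measurable_psi[measurable]: "psi \<tau> k \<in> borel_measurable borel"
  by (rule borel_measurable_continuous_onI[OF continuous_on_psi])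

lemma Pdom_eq_coordinates:
  assumes "Im \<tau> > 0"
  shows "Pdom \<tau> = {z. 0 \<le> scoord \<tau> z \<and> scoord \<tau> z < 1 \<and> 0 \<le> tcoord \<tau> z \<and> tcoord \<tau> z < 1}"
proof (intro set_eqI iffI)
  fix z assume "z \<in> Pdom \<tau>"
  then obtain s t where st: "0 \<le> s" "s < 1" "0 \<le> t" "t < 1" "z = of_real s + of_real t * \<tau>"
    unfolding Pdom_def by blast
  then have "tcoord \<tau> z = t" "scoord \<tau> z = s"
    using assms by (simp_all add: scoord_def tcoord_def)
  with st show "z \<in> {z. 0 \<le> scoord \<tau> z \<and> scoord \<tau> z < 1 \<and> 0 \<le> tcoord \<tau> z \<and> tcoord \<tau> z < 1}"
    by simp
next
  fix z assume z: "z \<in> {z. 0 \<le> scoord \<tau> z \<and> scoord \<tau> z < 1 \<and> 0 \<le> tcoord \<tau> z \<and> tcoord \<tau> z < 1}"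
  have "z = of_real (scoord \<tau> z) + of_real (tcoord \<tau> z) * \<tau>"
    using assms by (intro complex_eqI) (simp_all add: scoord_def tcoord_def)
  with z show "z \<in> Pdom \<tau>" unfolding Pdom_def by blast
qed

lemma sets_Pdom[measurable]:
  assumes "Im \<tau> > 0"
  shows "Pdom \<tau> \<in> sets lborel"
proof -
  have [measurable]: "tcoord \<tau> \<in> borel_measurable borel" "scoord \<tau> \<in> borel_measurable borel"
    by (intro borel_measurable_continuous_onI continuous_on_tcoord continuous_on_scoord)+
  show ?thesis unfolding Pdom_eq_coordinates[OF assms] by measurable
qed

lemma circ_avg_eq_lebesgue_integral:
  "circ_avg \<tau> k \<delta> z
    = (1 / (2 * pi)) * (LINT \<theta>|lborel. indicator {0..2*pi} \<theta> *\<^sub>R psi \<tau> k (z + of_real \<delta> * cis \<theta>))"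
proof -
  have "continuous_on {0..2*pi} (\<lambda>\<theta>. psi \<tau> k (z + of_real \<delta> * cis \<theta>))"
    by (rule continuous_on_compose2[OF continuous_on_psi]) (auto intro!: continuous_intros)
  then have "set_integrable lborel {0..2*pi} (\<lambda>\<theta>. psi \<tau> k (z + of_real \<delta> * cis \<theta>))"
    unfolding set_integrable_def by (intro borel_integrable_compact) simp_all
  from set_borel_integral_eq_integral(2)[OF this] show ?thesis
    unfolding circ_avg_def set_lebesgue_integral_def by simp
qed

lemma borel_measurable_circ_avg[measurable]: "circ_avg \<tau> k \<delta> \<in> borel_measurable borel"
proof -
  have [measurable]: "cis \<in> borel_measurable borel"
    by (intro borel_measurable_continuous_onI continuous_intros)
  have "(\<lambda>z. LINT \<theta>|lborel. indicator {0..2*pi} \<theta> *\<^sub>R psi \<tau> k (z + of_real \<delta> * cis \<theta>))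
      \<in> borel_measurable borel"
    by (rule lborel.borel_measurable_lebesgue_integral) measurable
  then show ?thesis unfolding circ_avg_eq_lebesgue_integral[abs_def] by measurable
qed

lemma measurable_circ_field[measurable (raw)]:
  assumes "f \<in> measurable M gff_mu" "g \<in> measurable M lborel"
  shows "(\<lambda>x. circ_field \<sigma> \<tau> (f x) \<delta> (g x)) \<in> borel_measurable M"
proof -
  have "(\<lambda>p. circ_field \<sigma> \<tau> (fst p) \<delta> (snd p)) \<in> borel_measurable (gff_mu \<Otimes>\<^sub>M lborel)"
    unfolding circ_field_def coef_def by measurable
  from measurable_compose[OF measurable_Pair[OF assms] this] show ?thesis by simp
qed

lemma borel_measurable_circ_field_variance[measurable]:
  "(\<lambda>z. \<integral>\<xi>. (circ_field \<sigma> \<tau> \<xi> \<delta> z)\<^sup>2 \<partial>gff_mu) \<in> borel_measurable lborel"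
  by (rule sigma_finite_measure.borel_measurable_lebesgue_integral[OF sigma_finite_gff_mu]) measurable

lemma borel_measurable_gmc_approx[measurable]:
  assumes [measurable]: "Im \<tau> > 0"
  shows "gmc_approx \<sigma> \<tau> \<delta> \<in> borel_measurable mu_hat"
  unfolding gmc_approx_def[abs_def] set_lebesgue_integral_def
  by (rule lborel.borel_measurable_lebesgue_integral) (unfold mu_hat_def, measurable)

lemma borel_measurable_gmc_mass[measurable]:
  assumes "Im \<tau> > 0"
  shows "gmc_mass \<sigma> \<tau> \<in> borel_measurable mu_hat"
  unfolding gmc_mass_def[abs_def]
  by (intro borel_measurable_lim_if_convergent borel_measurable_gmc_approx assms)

section \<open>The zero mode\<close>

lemma gmc_approx_zero_mode:
  "gmc_approx \<sigma> \<tau> \<delta> (m, \<xi>) = exp (2 * m) * gmc_approx \<sigma> \<tau> \<delta> (0, \<xi>)"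
proof -
  have "(\<lambda>z. exp (2 * (m + circ_field \<sigma> \<tau> \<xi> \<delta> z) - 2 * (\<integral>\<xi>. (circ_field \<sigma> \<tau> \<xi> \<delta> z)\<^sup>2 \<partial>gff_mu)))
    = (\<lambda>z. exp (2 * m) * exp (2 * (0 + circ_field \<sigma> \<tau> \<xi> \<delta> z)
          - 2 * (\<integral>\<xi>. (circ_field \<sigma> \<tau> \<xi> \<delta> z)\<^sup>2 \<partial>gff_mu)))"
    by (simp add: fun_eq_iff exp_add[symmetric] algebra_simps)
  then show ?thesis
    unfolding gmc_approx_def fst_conv snd_conv by (simp add: set_integral_mult_right)
qed

lemma gmc_mass_zero_mode:
  "gmc_mass \<sigma> \<tau> (m, \<xi>) = exp (2 * m) * gmc_mass \<sigma> \<tau> (0, \<xi>)"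
proof -
  let ?s = "\<lambda>n. gmc_approx \<sigma> \<tau> (1 / 2 ^ n) (0, \<xi>)"
  have c: "exp (2 * m) \<noteq> 0" by simp
  have "lim (\<lambda>n. exp (2 * m) * ?s n) = exp (2 * m) * lim ?s" if "convergent ?s"
    using that by (intro limI tendsto_mult_left) (simp add: convergent_LIMSEQ_iff)
  then show ?thesis
    unfolding gmc_mass_def gmc_approx_zero_mode[of _ _ _ m]
    by (simp add: convergent_mult_const_iff[OF c])
qed

lemma gmc_mass_nonneg: "0 \<le> gmc_mass \<sigma> \<tau> \<phi>"
proof -
  have approx_nonneg: "0 \<le> gmc_approx \<sigma> \<tau> \<delta> \<phi>" for \<delta>
    unfolding gmc_approx_def set_lebesgue_integral_def
    by (rule integral_nonneg_AE) (simp add: indicator_def)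
  let ?s = "\<lambda>n. gmc_approx \<sigma> \<tau> (1 / 2 ^ n) \<phi>"
  have "0 \<le> lim ?s" if "convergent ?s"
    using that approx_nonneg by (intro LIMSEQ_le_const) (auto simp: convergent_LIMSEQ_iff)
  then show ?thesis unfolding gmc_mass_def by auto
qed

lemma emeasure_exp_scaled_band_le:
  fixes G a b :: real
  assumes "0 < a"
  shows "emeasure lborel {m. exp (2 * m) * G \<in> {a..b}} \<le> ennreal ((ln b - ln a) / 2)"
proof (cases "0 < G \<and> a \<le> b")
  case True
  let ?l = "(ln a - ln G) / 2" and ?r = "(ln b - ln G) / 2"
  have "{m. exp (2 * m) * G \<in> {a..b}} \<subseteq> {?l..?r}"
  proof
    fix m assume "m \<in> {m. exp (2 * m) * G \<in> {a..b}}"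
    then have "ln a \<le> ln (exp (2 * m) * G)" "ln (exp (2 * m) * G) \<le> ln b"
      using True assms by (subst ln_le_cancel_iff; simp)+
    moreover have "ln (exp (2 * m) * G) = 2 * m + ln G" using True by (simp add: ln_mult)
    ultimately show "m \<in> {?l..?r}" by simp
  qed
  then have "emeasure lborel {m. exp (2 * m) * G \<in> {a..b}} \<le> emeasure lborel {?l..?r}"
    by (rule emeasure_mono) simp
  also have "\<dots> = ennreal ((ln b - ln a) / 2)"
    using True assms by (simp add: diff_divide_distrib)
  finally show ?thesis .
next
  case False
  then have "{m. exp (2 * m) * G \<in> {a..b}} = {}"
    using assms by (auto simp: not_less mult_nonneg_nonpos2 mult_le_0_iff)
      (smt (verit) exp_gt_zero mult_nonneg_nonpos)
  then show ?thesis by (simp only: emeasure_empty zero_le)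
qed

interpretation mu_hat: pair_sigma_finite lborel gff_mu
  by (simp add: pair_sigma_finite_def sigma_finite_gff_mu lborel.sigma_finite_measure_axioms)

lemma nn_integral_gmc_mass_band_le:
  assumes tau: "Im \<tau> > 0" and a: "0 < a" and h[measurable]: "h \<in> borel_measurable gff_mu"
  shows "(\<integral>\<^sup>+\<phi>. h (snd \<phi>) * indicator {a..b} (gmc_mass \<sigma> \<tau> \<phi>) \<partial>mu_hat)
     \<le> ennreal ((ln b - ln a) / 2) * (\<integral>\<^sup>+\<xi>. h \<xi> \<partial>gff_mu)"
proof -
  note borel_measurable_gmc_mass[OF tau, unfolded mu_hat_def, measurable]
  have "(\<integral>\<^sup>+\<phi>. h (snd \<phi>) * indicator {a..b} (gmc_mass \<sigma> \<tau> \<phi>) \<partial>mu_hat)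
     = (\<integral>\<^sup>+\<xi>. \<integral>\<^sup>+m. h \<xi> * indicator {a..b} (gmc_mass \<sigma> \<tau> (m, \<xi>)) \<partial>lborel \<partial>gff_mu)"
  proof -
    have "(\<lambda>\<phi>. indicator {a..b} (gmc_mass \<sigma> \<tau> \<phi>) :: ennreal) \<in> borel_measurable (lborel \<Otimes>\<^sub>M gff_mu)"
      by (rule measurable_compose[OF borel_measurable_gmc_mass[OF tau, unfolded mu_hat_def]
          borel_measurable_indicator]) simp
    then have "(\<lambda>\<phi>. h (snd \<phi>) * indicator {a..b} (gmc_mass \<sigma> \<tau> \<phi>)) \<in> borel_measurable (lborel \<Otimes>\<^sub>M gff_mu)"
      by (intro borel_measurable_times_ennreal) simp_all
    from mu_hat.nn_integral_snd[OF this] show ?thesis by (simp add: mu_hat_def)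
  qed
  also have "\<dots> \<le> (\<integral>\<^sup>+\<xi>. h \<xi> * ennreal ((ln b - ln a) / 2) \<partial>gff_mu)"
  proof (intro nn_integral_mono)
    fix \<xi>
    let ?A = "{m. exp (2 * m) * gmc_mass \<sigma> \<tau> (0, \<xi>) \<in> {a..b}}"
    have "(\<lambda>m. exp (2 * m) * gmc_mass \<sigma> \<tau> (0, \<xi>)) \<in> borel_measurable borel"
      by (intro borel_measurable_continuous_onI continuous_intros)
    then have "(\<lambda>m. exp (2 * m) * gmc_mass \<sigma> \<tau> (0, \<xi>)) -` {a..b} \<in> sets borel"
      by (rule measurable_sets_borel) simp
    then have A: "?A \<in> sets lborel"
      by (simp only: vimage_def sets_lborel)
    have "indicator {a..b} (gmc_mass \<sigma> \<tau> (m, \<xi>)) = (indicator ?A m :: ennreal)" for m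
      using gmc_mass_zero_mode[of \<sigma> \<tau> m \<xi>] by (simp add: indicator_def)
    then have "(\<integral>\<^sup>+m. h \<xi> * indicator {a..b} (gmc_mass \<sigma> \<tau> (m, \<xi>)) \<partial>lborel)
        = (\<integral>\<^sup>+m. h \<xi> * indicator ?A m \<partial>lborel)"
      by simp
    also have "\<dots> = h \<xi> * emeasure lborel ?A"
      by (rule nn_integral_cmult_indicator[OF A])
    also have "\<dots> \<le> h \<xi> * ennreal ((ln b - ln a) / 2)"
      by (intro mult_left_mono emeasure_exp_scaled_band_le a) simp
    finally show "(\<integral>\<^sup>+m. h \<xi> * indicator {a..b} (gmc_mass \<sigma> \<tau> (m, \<xi>)) \<partial>lborel)
      \<le> h \<xi> * ennreal ((ln b - ln a) / 2)" .
  qed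
  also have "\<dots> = ennreal ((ln b - ln a) / 2) * (\<integral>\<^sup>+\<xi>. h \<xi> \<partial>gff_mu)"
    by (subst nn_integral_multc) (auto simp: mult.commute)
  finally show ?thesis .
qed

lemma nn_integral_gmc_mass_band_finite:
  assumes "Im \<tau> > 0" and "0 < a" and "h \<in> borel_measurable gff_mu"
    and "(\<integral>\<^sup>+\<xi>. h \<xi> \<partial>gff_mu) < \<infinity>"
  shows "(\<integral>\<^sup>+\<phi>. h (snd \<phi>) * indicator {a..b} (gmc_mass \<sigma> \<tau> \<phi>) \<partial>mu_hat) < \<infinity>"
proof -
  have "(\<integral>\<^sup>+\<phi>. h (snd \<phi>) * indicator {a..b} (gmc_mass \<sigma> \<tau> \<phi>) \<partial>mu_hat)
     \<le> ennreal ((ln b - ln a) / 2) * (\<integral>\<^sup>+\<xi>. h \<xi> \<partial>gff_mu)"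
    by (rule nn_integral_gmc_mass_band_le[OF assms(1-3)])
  also have "\<dots> < \<infinity>"
    using assms(4) by (simp add: ennreal_mult_less_top)
  finally show ?thesis .
qed

lemma emeasure_gmc_mass_band_finite:
  assumes tau: "Im \<tau> > 0" and "0 < a"
  shows "emeasure mu_hat {\<phi> \<in> space mu_hat. gmc_mass \<sigma> \<tau> \<phi> \<in> {a..b}} < \<infinity>"
proof -
  note borel_measurable_gmc_mass[OF tau, measurable]
  have band: "{\<phi> \<in> space mu_hat. gmc_mass \<sigma> \<tau> \<phi> \<in> {a..b}} \<in> sets mu_hat"
    by measurable
  have "emeasure mu_hat {\<phi> \<in> space mu_hat. gmc_mass \<sigma> \<tau> \<phi> \<in> {a..b}}
      = (\<integral>\<^sup>+\<phi>. (\<lambda>_. 1) (snd \<phi>) * indicator {a..b} (gmc_mass \<sigma> \<tau> \<phi>) \<partial>mu_hat)"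
    by (subst nn_integral_indicator[OF band, symmetric]) (intro nn_integral_cong, simp add: indicator_def)
  also have "\<dots> < \<infinity>"
    using prob_space.emeasure_space_1[OF prob_space_gff_mu]
    by (intro nn_integral_gmc_mass_band_finite tau assms) auto
  finally show ?thesis .
qed

lemma emeasure_gmc_mass_open_band_finite:
  assumes "Im \<tau> > 0" and "0 < c"
  shows "emeasure mu_hat {\<phi> \<in> space mu_hat. c < gmc_mass \<sigma> \<tau> \<phi> \<and> gmc_mass \<sigma> \<tau> \<phi> < d} < \<infinity>"
proof -
  have "emeasure mu_hat {\<phi> \<in> space mu_hat. c < gmc_mass \<sigma> \<tau> \<phi> \<and> gmc_mass \<sigma> \<tau> \<phi> < d}
      \<le> emeasure mu_hat {\<phi> \<in> space mu_hat. gmc_mass \<sigma> \<tau> \<phi> \<in> {c..d}}"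
    using borel_measurable_gmc_mass[OF assms(1), measurable] by (intro emeasure_mono) auto
  also have "\<dots> < \<infinity>"
    by (rule emeasure_gmc_mass_band_finite[OF assms])
  finally show ?thesis .
qed

section \<open>Moments of the Paley--Wiener pairing\<close>

definition H_pair_coef :: "real \<Rightarrow> complex \<Rightarrow> (complex \<Rightarrow> real) \<Rightarrow> int \<times> int \<Rightarrow> real" where
  "H_pair_coef \<sigma> \<tau> f k = eig \<tau> k * fcoef \<tau> f k * sqrt (\<sigma>\<^sup>2 / (2 * eig \<tau> k))"

lemma H_pair_eq_series_lim: "H_pair \<sigma> \<tau> f \<phi> = series_lim (\<lambda>k. H_pair_coef \<sigma> \<tau> f k * snd \<phi> k)"
  unfolding H_pair_def coef_def H_pair_coef_def by (simp add: mult.assoc)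

lemma borel_measurable_H_pair[measurable]: "H_pair \<sigma> \<tau> f \<in> borel_measurable mu_hat"
  unfolding H_pair_eq_series_lim[abs_def] mu_hat_def by measurable

lemma eig_nonneg: "0 \<le> eig \<tau> k"
  unfolding eig_def by (cases k) simp

lemma H_pair_coef_squared: "(H_pair_coef \<sigma> \<tau> f k)\<^sup>2 = \<sigma>\<^sup>2 / 2 * (eig \<tau> k * (fcoef \<tau> f k)\<^sup>2)"
proof (cases "eig \<tau> k = 0")
  case False
  then have "0 < eig \<tau> k" using eig_nonneg[of \<tau> k] by simp
  then show ?thesis
    unfolding H_pair_coef_def by (simp add: power_mult_distrib power2_eq_square field_simps)
qed (simp add: H_pair_coef_def)

lemma sum_H_pair_coef_squared_le:
  assumes "in_H \<tau> f"
  shows "(\<Sum>k\<in>box N. (H_pair_coef \<sigma> \<tau> f k)\<^sup>2)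
    \<le> \<sigma>\<^sup>2 / 2 * (\<Sum>\<^sub>\<infinity>k\<in>UNIV - {(0, 0)}. eig \<tau> k * (fcoef \<tau> f k)\<^sup>2)"
proof -
  have "(\<lambda>k. eig \<tau> k * (fcoef \<tau> f k)\<^sup>2) summable_on (UNIV - {(0, 0)})"
    using assms unfolding in_H_def by blast
  then have "(\<Sum>k\<in>box N. eig \<tau> k * (fcoef \<tau> f k)\<^sup>2)
      \<le> (\<Sum>\<^sub>\<infinity>k\<in>UNIV - {(0, 0)}. eig \<tau> k * (fcoef \<tau> f k)\<^sup>2)"
    by (rule finite_sum_le_infsum[OF _ finite_box]) (auto simp: box_def eig_nonneg)
  then have "\<sigma>\<^sup>2 / 2 * (\<Sum>k\<in>box N. eig \<tau> k * (fcoef \<tau> f k)\<^sup>2)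
      \<le> \<sigma>\<^sup>2 / 2 * (\<Sum>\<^sub>\<infinity>k\<in>UNIV - {(0, 0)}. eig \<tau> k * (fcoef \<tau> f k)\<^sup>2)"
    by (intro mult_left_mono) auto
  then show ?thesis
    by (simp only: H_pair_coef_squared sum_distrib_left)
qed

lemma nn_integral_exp_abs_H_pair_finite:
  assumes "in_H \<tau> f" and "0 \<le> a"
  shows "(\<integral>\<^sup>+\<xi>. ennreal (exp (a * \<bar>H_pair \<sigma> \<tau> f (0, \<xi>)\<bar>)) \<partial>gff_mu) < \<infinity>"
  unfolding H_pair_eq_series_lim snd_conv
  by (rule le_less_trans[OF nn_integral_exp_abs_series_lim_le[OF assms(2)
        sum_H_pair_coef_squared_le[OF assms(1)]]]) simp

lemma integrable_exp_abs_H_pair_band: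
  assumes tau: "Im \<tau> > 0" and f: "in_H \<tau> f" and a: "0 \<le> a" and c: "0 < c"
  shows "integrable mu_hat (\<lambda>\<phi>. exp (a * \<bar>H_pair \<sigma> \<tau> f \<phi>\<bar>) * indicator {c..d} (gmc_mass \<sigma> \<tau> \<phi>))"
proof (rule integrableI_bounded)
  note borel_measurable_gmc_mass[OF tau, measurable]
  show "(\<lambda>\<phi>. exp (a * \<bar>H_pair \<sigma> \<tau> f \<phi>\<bar>) * indicator {c..d} (gmc_mass \<sigma> \<tau> \<phi>)) \<in> borel_measurable mu_hat"
    by measurable
  have "(\<lambda>\<xi>. ennreal (exp (a * \<bar>H_pair \<sigma> \<tau> f (0, \<xi>)\<bar>))) \<in> borel_measurable gff_mu"
    unfolding H_pair_eq_series_lim snd_conv by measurable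
  from nn_integral_gmc_mass_band_finite[OF tau c this nn_integral_exp_abs_H_pair_finite[OF f a]]
  have "(\<integral>\<^sup>+\<phi>. ennreal (exp (a * \<bar>H_pair \<sigma> \<tau> f (0, snd \<phi>)\<bar>)) * indicator {c..d} (gmc_mass \<sigma> \<tau> \<phi>)
      \<partial>mu_hat) < \<infinity>" .
  moreover have "ennreal (exp (a * \<bar>H_pair \<sigma> \<tau> f (0, snd \<phi>)\<bar>)) * indicator {c..d} (gmc_mass \<sigma> \<tau> \<phi>)
      = ennreal (norm (exp (a * \<bar>H_pair \<sigma> \<tau> f \<phi>\<bar>) * indicator {c..d} (gmc_mass \<sigma> \<tau> \<phi>)))" for \<phi>
    by (simp add: H_pair_def indicator_def)
  ultimately show "(\<integral>\<^sup>+\<phi>. ennreal (norm (exp (a * \<bar>H_pair \<sigma> \<tau> f \<phi>\<bar>) * indicator {c..d} (gmc_mass \<sigma> \<tau> \<phi>)))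
      \<partial>mu_hat) < \<infinity>"
    by simp
qed

lemma powr_le_exp:
  fixes x p :: real
  assumes "0 \<le> x" "0 < p"
  shows "x powr p \<le> p powr p * exp x"
proof -
  have "x \<le> p * exp (x / p)"
    using exp_ge_add_one_self[of "x / p"] assms by (simp add: field_simps)
  then have "x powr p \<le> (p * exp (x / p)) powr p"
    using assms by (intro powr_mono2) auto
  also have "\<dots> = p powr p * exp (x / p) powr p"
    using assms by (simp add: powr_mult)
  also have "exp (x / p) powr p = exp x"
    using assms by (simp add: powr_def)
  finally show ?thesis .
qed

lemma in_Lp_f_Delta_phi_band:
  assumes tau: "Im \<tau> > 0" and f: "in_H \<tau> f" and p: "1 \<le> p" and c: "0 < c"
  shows "in_Lp mu_hat p (\<lambda>\<phi>. f_Delta_phi \<sigma> \<tau> f \<phi> * indicator {c..d} (gmc_mass \<sigma> \<tau> \<phi>))"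
  unfolding in_Lp_def
proof
  note borel_measurable_gmc_mass[OF tau, measurable]
  let ?F = "\<lambda>\<phi>. f_Delta_phi \<sigma> \<tau> f \<phi> * indicator {c..d} (gmc_mass \<sigma> \<tau> \<phi>)"
  show [measurable]: "?F \<in> borel_measurable mu_hat"
    unfolding f_Delta_phi_def by measurable
  have "\<bar>?F \<phi>\<bar> powr p \<le> p powr p * (exp (1 * \<bar>H_pair \<sigma> \<tau> f \<phi>\<bar>) * indicator {c..d} (gmc_mass \<sigma> \<tau> \<phi>))"
    for \<phi>
    using powr_le_exp[of "\<bar>H_pair \<sigma> \<tau> f \<phi>\<bar>" p] p
    by (auto simp: f_Delta_phi_def indicator_def)
  then show "integrable mu_hat (\<lambda>\<phi>. \<bar>?F \<phi>\<bar> powr p)"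
    by (intro Bochner_Integration.integrable_bound[OF
          integrable_mult_right[OF integrable_exp_abs_H_pair_band[OF tau f _ c,
            where a=1 and \<sigma>=\<sigma> and d=d], where c="p powr p"]])
      (use p in \<open>auto intro: order_trans\<close>)
qed

section \<open>The Liouville measure\<close>

lemma emeasure_density_le_of_le_one:
  fixes f :: "'a \<Rightarrow> real"
  assumes "f \<in> borel_measurable M" and "\<And>x. f x \<le> 1" and "X \<in> sets M"
  shows "emeasure (density M f) X \<le> emeasure M X"
proof -
  have "emeasure (density M f) X = (\<integral>\<^sup>+x. ennreal (f x) * indicator X x \<partial>M)"
    using assms by (simp add: emeasure_density)
  also have "\<dots> \<le> (\<integral>\<^sup>+x. indicator X x \<partial>M)"
    using assms(2) by (intro nn_integral_mono) (auto simp: indicator_def ennreal_le_1)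
  also have "\<dots> = emeasure M X"
    using assms(3) by simp
  finally show ?thesis .
qed

lemma integrable_density_of_le_one:
  fixes f g :: "'a \<Rightarrow> real"
  assumes [measurable]: "f \<in> borel_measurable M"
    and "\<And>x. 0 \<le> f x" "\<And>x. f x \<le> 1" and g: "integrable M g"
  shows "integrable (density M f) g"
proof -
  have [measurable]: "g \<in> borel_measurable M" using g by simp
  have "integrable M (\<lambda>x. f x *\<^sub>R g x)"
    using assms by (intro Bochner_Integration.integrable_bound[OF g])
      (auto simp: abs_mult intro!: mult_left_le_one_le)
  with assms show ?thesis
    by (subst integrable_density) auto
qed

lemma in_Lp_density_of_le_one:
  fixes f :: "'a \<Rightarrow> real"
  assumes "f \<in> borel_measurable M" and "\<And>x. 0 \<le> f x" "\<And>x. f x \<le> 1" and "in_Lp M p g"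
  shows "in_Lp (density M f) p g"
  using assms integrable_density_of_le_one[OF assms(1-3)] unfolding in_Lp_def by auto

lemma borel_measurable_liouville_density[measurable]:
  assumes "Im \<tau> > 0"
  shows "(\<lambda>\<phi>. exp (- lmb / \<sigma>\<^sup>2 * gmc_mass \<sigma> \<tau> \<phi>)) \<in> borel_measurable mu_hat"
  using borel_measurable_gmc_mass[OF assms] by measurable

lemma liouville_density_le_one:
  assumes "0 \<le> lmb"
  shows "exp (- lmb / \<sigma>\<^sup>2 * gmc_mass \<sigma> \<tau> \<phi>) \<le> 1"
  using assms gmc_mass_nonneg[of \<sigma> \<tau> \<phi>] by simp

lemma sigma_finite_liouville:
  assumes "Im \<tau> > 0"
  shows "sigma_finite_measure (liouville \<sigma> \<tau> lmb)"
proof -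
  interpret sigma_finite_measure mu_hat
    unfolding mu_hat_def by (rule mu_hat.sigma_finite_measure_axioms)
  show ?thesis
    unfolding liouville_def
    using borel_measurable_liouville_density[OF assms] by (subst sigma_finite_iff_density_finite) auto
qed

lemma emeasure_liouville_le:
  assumes "Im \<tau> > 0" and "0 \<le> lmb" and "X \<in> sets mu_hat"
  shows "emeasure (liouville \<sigma> \<tau> lmb) X \<le> emeasure mu_hat X"
  unfolding liouville_def
  by (rule emeasure_density_le_of_le_one[OF borel_measurable_liouville_density[OF assms(1)]
        liouville_density_le_one[OF assms(2)] assms(3)])

lemma integrable_liouville:
  fixes g :: "real \<times> (int \<times> int \<Rightarrow> real) \<Rightarrow> real"
  assumes "Im \<tau> > 0" and "0 \<le> lmb" and "integrable mu_hat g"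
  shows "integrable (liouville \<sigma> \<tau> lmb) g"
proof -
  have "0 \<le> exp (- lmb / \<sigma>\<^sup>2 * gmc_mass \<sigma> \<tau> \<phi>)" for \<phi>
    by simp
  then show ?thesis
    unfolding liouville_def
    by (rule integrable_density_of_le_one[OF borel_measurable_liouville_density[OF assms(1)] _
          liouville_density_le_one[OF assms(2)] assms(3)])
qed

lemma in_Lp_liouville:
  assumes "Im \<tau> > 0" and "0 \<le> lmb" and "in_Lp mu_hat p g"
  shows "in_Lp (liouville \<sigma> \<tau> lmb) p g"
proof -
  have "0 \<le> exp (- lmb / \<sigma>\<^sup>2 * gmc_mass \<sigma> \<tau> \<phi>)" for \<phi>
    by simp
  then show ?thesis
    unfolding liouville_def
    by (rule in_Lp_density_of_le_one[OF borel_measurable_liouville_density[OF assms(1)] _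
          liouville_density_le_one[OF assms(2)] assms(3)])
qed

theorem lemma2p4:
  fixes \<tau> :: complex and \<sigma> lmb :: real
  assumes "Im \<tau> > 0" and "lmb > 0" and "0 < \<sigma>" and "\<sigma> < 2 * sqrt pi"
  shows "sigma_finite_measure (liouville \<sigma> \<tau> lmb)
    \<and> (\<forall>\<epsilon>. 0 < \<epsilon> \<and> \<epsilon> < 1 \<longrightarrow>
         emeasure (liouville \<sigma> \<tau> lmb)
           {\<phi> \<in> space (liouville \<sigma> \<tau> lmb). \<epsilon> < gmc_mass \<sigma> \<tau> \<phi> \<and> gmc_mass \<sigma> \<tau> \<phi> < 1 / \<epsilon>} < \<infinity>
       \<and> emeasure mu_hat
           {\<phi> \<in> space mu_hat. \<epsilon> < gmc_mass \<sigma> \<tau> \<phi> \<and> gmc_mass \<sigma> \<tau> \<phi> < 1 / \<epsilon>} < \<infinity>)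
    \<and> (\<forall>f \<epsilon> a p. in_H \<tau> f \<and> 0 < \<epsilon> \<and> \<epsilon> < 1 \<and> a > 0 \<and> 1 \<le> p \<longrightarrow>
         in_Lp mu_hat p (\<lambda>\<phi>. f_Delta_phi \<sigma> \<tau> f \<phi> * indicator {\<epsilon>..1/\<epsilon>} (gmc_mass \<sigma> \<tau> \<phi>))
       \<and> in_Lp (liouville \<sigma> \<tau> lmb) p
           (\<lambda>\<phi>. f_Delta_phi \<sigma> \<tau> f \<phi> * indicator {\<epsilon>..1/\<epsilon>} (gmc_mass \<sigma> \<tau> \<phi>))
       \<and> integrable mu_hat
           (\<lambda>\<phi>. exp (a * \<bar>H_pair \<sigma> \<tau> f \<phi>\<bar>) * indicator {\<epsilon>..1/\<epsilon>} (gmc_mass \<sigma> \<tau> \<phi>))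
       \<and> integrable (liouville \<sigma> \<tau> lmb)
           (\<lambda>\<phi>. exp (a * \<bar>H_pair \<sigma> \<tau> f \<phi>\<bar>) * indicator {\<epsilon>..1/\<epsilon>} (gmc_mass \<sigma> \<tau> \<phi>)))"
proof (intro conjI allI impI sigma_finite_liouville[OF assms(1)])
  fix \<epsilon> :: real
  assume "0 < \<epsilon> \<and> \<epsilon> < 1"
  let ?band = "{\<phi> \<in> space mu_hat. \<epsilon> < gmc_mass \<sigma> \<tau> \<phi> \<and> gmc_mass \<sigma> \<tau> \<phi> < 1 / \<epsilon>}"
  have "?band \<in> sets mu_hat"
    using borel_measurable_gmc_mass[OF assms(1), measurable] by measurable
  moreover show "emeasure mu_hat ?band < \<infinity>"
    using \<open>0 < \<epsilon> \<and> \<epsilon> < 1\<close> by (intro emeasure_gmc_mass_open_band_finite assms(1)) simp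
  ultimately show "emeasure (liouville \<sigma> \<tau> lmb)
      {\<phi> \<in> space (liouville \<sigma> \<tau> lmb). \<epsilon> < gmc_mass \<sigma> \<tau> \<phi> \<and> gmc_mass \<sigma> \<tau> \<phi> < 1 / \<epsilon>} < \<infinity>"
    using emeasure_liouville_le[OF assms(1) less_imp_le[OF assms(2)], where \<sigma>=\<sigma>]
    by (auto simp: liouville_def intro: le_less_trans)
next
  fix f :: "complex \<Rightarrow> real" and \<epsilon> a p :: real
  assume "in_H \<tau> f \<and> 0 < \<epsilon> \<and> \<epsilon> < 1 \<and> a > 0 \<and> 1 \<le> p"
  then have f: "in_H \<tau> f" and \<epsilon>: "0 < \<epsilon>" and a: "0 \<le> a" and p: "1 \<le> p" by auto
  show "in_Lp mu_hat p (\<lambda>\<phi>. f_Delta_phi \<sigma> \<tau> f \<phi> * indicator {\<epsilon>..1/\<epsilon>} (gmc_mass \<sigma> \<tau> \<phi>))"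
    by (rule in_Lp_f_Delta_phi_band[OF assms(1) f p \<epsilon>])
  then show "in_Lp (liouville \<sigma> \<tau> lmb) p
      (\<lambda>\<phi>. f_Delta_phi \<sigma> \<tau> f \<phi> * indicator {\<epsilon>..1/\<epsilon>} (gmc_mass \<sigma> \<tau> \<phi>))"
    by (rule in_Lp_liouville[OF assms(1) less_imp_le[OF assms(2)]])
  show "integrable mu_hat
      (\<lambda>\<phi>. exp (a * \<bar>H_pair \<sigma> \<tau> f \<phi>\<bar>) * indicator {\<epsilon>..1/\<epsilon>} (gmc_mass \<sigma> \<tau> \<phi>))"
    by (rule integrable_exp_abs_H_pair_band[OF assms(1) f a \<epsilon>])
  then show "integrable (liouville \<sigma> \<tau> lmb)
      (\<lambda>\<phi>. exp (a * \<bar>H_pair \<sigma> \<tau> f \<phi>\<bar>) * indicator {\<epsilon>..1/\<epsilon>} (gmc_mass \<sigma> \<tau> \<phi>))"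
    by (rule integrable_liouville[OF assms(1) less_imp_le[OF assms(2)]])
qed

end
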